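(* The bialgebra $(\mathcal{C}omp,\uplus,\Delta)$ is made a double bialgebra with the coproduct given by the following: if $(A_1,\ldots,A_k)\in \mathbf{Comp}[A]$, \begin{align*} \delta_A(A_1,\ldots,A_k)&=\sum_{(\sigma,\tau)\in \mathbf{cont}_k} \sigma \rightarrow (A_1,\ldots,A_k)\otimes \tau\rightarrow (A_1,\ldots,A_k)\\ &=\sum_{1\leq i_1<\ldots<i_p<k}(A_1\sqcup\ldots \sqcup A_{i_1},\ldots,A_{i_p+1}\sqcup\ldots \sqcup A_k)\otimes (A_1,\ldots, A_{i_1})\uplus \ldots\uplus (A_{i_p+1},\ldots, A_k). \end{align*} The counit is given by $\varepsilon'(A_1,\ldots, A_k)=\delta_{k,1}$.
   Context: $\mathcal{C}omp[A]$ is the vector space with basis the set compositions $(A_1,\ldots,A_k)$ of the finite set $A$; it is a twisted bialgebra with the quasi-shuffle product $\uplus$, $(A_1,\ldots,A_k)\uplus(A_{k+1},\ldots,A_{k+l})=\sum_{\sigma\in QSh(k,l)}\sigma\rightarrow(A_1,\ldots,A_{k+l})$, where $QSh(k,l)$ is the set of surjections $\sigma:\{1,\ldots,k+l\}\to\{1,\ldots,\max\sigma\}$ nondecreasing on $\{1,\ldots,k\}$ and on $\{k+1,\ldots,k+l\}$, and for a surjection $\sigma:\{1,\ldots,k\}\to\{1,\ldots,\max\sigma\}$, $\sigma\rightarrow(A_1,\ldots,A_k)=\big(\bigcup_{\sigma(i)=1}A_i,\ldots,\bigcup_{\sigma(i)=\max\sigma}A_i\big)$; the coproduct $\Delta$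 is deconcatenation: $\Delta_{A,B}(A_1,\ldots,A_k)=(A_1,\ldots,A_p)\otimes(A_{p+1},\ldots,A_k)$ if $A_1\sqcup\cdots\sqcup A_p=A$, $0$ otherwise. $\mathbf{cont}_k$ is the set of pairs $(\sigma,\tau)$ with $\sigma:\{1,\ldots,k\}\to\{1,\ldots,\max\sigma\}$ a nondecreasing surjection, $\tau:\{1,\ldots,k\}\to\{1,\ldots,\max\tau\}$ a surjection, such that $i<j$ and $\sigma(i)=\sigma(j)$ imply $\tau(i)<\tau(j)$. A double twisted bialgebra is a twisted bialgebra $(\mathcal{P},m,\Delta)$ with a second coproduct $\delta_A:\mathcal{P}[A]\to\mathcal{P}[A]\otimes\mathcal{P}[A]$ for each $A$, natural, coassociative, counital, multiplicative, and such that $(\Delta_{A,B}\otimes Id)\circ\delta_{A\sqcup B}=m_{1,3,24}\circ(\delta_A\otimes\delta_B)\circ\Delta_{A,B}$ (with $m_{1,3,24}(x\otimes y\otimes z\otimes t)=x\otimes z\otimes m_{A,B}(y\otimes t)$) and $\varepsilon$ is compatible with $\delta$. *)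

theory Defs
  imports Main
begin

text \<open>The space Comp[A] (coefficients in a field 'k) is
  represented by coefficient functions on lists of sets that vanish outside Comp A;
  tensor products Comp[A] (x) Comp[B] by coefficient functions on pairs, and so on.\<close>

definition is_comp :: "'a set \<Rightarrow> 'a set list \<Rightarrow> bool" where
  "is_comp A c \<longleftrightarrow> (\<forall>X\<in>set c. X \<noteq> {}) \<and>
     (\<forall>i j. i < j \<and> j < length c \<longrightarrow> c ! i \<inter> c ! j = {}) \<and> \<Union>(set c) = A"

definition Comp :: "'a set \<Rightarrow> 'a set list set" where
  "Comp A = {c. is_comp A c}"

definition vec :: "'a set \<Rightarrow> ('a set list \<Rightarrow> 'k::zero) \<Rightarrow> bool" where
  "vec A x \<longleftrightarrow> (\<forall>c. c \<notin> Comp A \<longrightarrow> x c = 0)"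

definition basis :: "'a set list \<Rightarrow> 'a set list \<Rightarrow> 'k::zero_neq_one" where
  "basis c = (\<lambda>z. if z = c then 1 else 0)"

definition unit :: "'a set list \<Rightarrow> 'k::zero_neq_one" where
  "unit = basis []"

text \<open>Surjections sigma : {1..k} -> {1..max sigma} are encoded 0-based as lists s of
  length k with set s = {0..<m}; then m = card (set s) plays the role of max sigma.\<close>
definition is_surj :: "nat list \<Rightarrow> bool" where
  "is_surj s \<longleftrightarrow> set s = {..<card (set s)}"

definition act :: "nat list \<Rightarrow> 'a set list \<Rightarrow> 'a set list" where
  "act s c = map (\<lambda>j. \<Union>{c ! i | i. i < length s \<and> s ! i = j}) [0..<card (set s)]"

definition QSh :: "nat \<Rightarrow> nat \<Rightarrow> nat list set" where
  "QSh k l = {s. length s = k + l \<and> is_surj s \<and>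
      sorted_wrt (<) (take k s) \<and> sorted_wrt (<) (drop k s)}"

definition cont :: "nat \<Rightarrow> (nat list \<times> nat list) set" where
  "cont k = {(s, t). length s = k \<and> length t = k \<and> is_surj s \<and> sorted s \<and> is_surj t \<and>
      (\<forall>i j. i < j \<and> j < k \<and> s ! i = s ! j \<longrightarrow> t ! i < t ! j)}"

definition qsh :: "'a set list \<Rightarrow> 'a set list \<Rightarrow> 'a set list \<Rightarrow> 'k::comm_ring_1" where
  "qsh c d = (\<lambda>z. \<Sum>s\<in>QSh (length c) (length d). if act s (c @ d) = z then 1 else 0)"

definition mult :: "'a set \<Rightarrow> 'a set \<Rightarrow> ('a set list \<Rightarrow> 'k::comm_ring_1)
    \<Rightarrow> ('a set list \<Rightarrow> 'k) \<Rightarrow> 'a set list \<Rightarrow> 'k" where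
  "mult A B x y = (\<lambda>z. \<Sum>(c, d)\<in>Comp A \<times> Comp B. x c * y d * qsh c d z)"

text \<open>Product in Comp[A] (x) Comp[A] times Comp[B] (x) Comp[B] to
  Comp[A u B] (x) Comp[A u B], i.e. (m (x) m) o (23).\<close>
definition mult2 :: "'a set \<Rightarrow> 'a set \<Rightarrow> ('a set list \<times> 'a set list \<Rightarrow> 'k::comm_ring_1)
    \<Rightarrow> ('a set list \<times> 'a set list \<Rightarrow> 'k) \<Rightarrow> 'a set list \<times> 'a set list \<Rightarrow> 'k" where
  "mult2 A B S T = (\<lambda>(u, v). \<Sum>(a, b)\<in>Comp A \<times> Comp A. \<Sum>(c, d)\<in>Comp B \<times> Comp B.
      S (a, b) * T (c, d) * qsh a c u * qsh b d v)"

fun qshs :: "'a set list list \<Rightarrow> 'a set list \<Rightarrow> 'k::comm_ring_1" where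
  "qshs [] = unit"
| "qshs (b # bs) = mult (\<Union>(set b)) (\<Union>(\<Union>(set ` set bs))) (basis b) (qshs bs)"

definition dec :: "'a set \<Rightarrow> 'a set list \<Rightarrow> 'a set list \<times> 'a set list \<Rightarrow> 'k::zero_neq_one" where
  "dec A c = (\<lambda>(u, v). if c = u @ v \<and> \<Union>(set u) = A then 1 else 0)"

definition Delta :: "'a set \<Rightarrow> 'a set \<Rightarrow> ('a set list \<Rightarrow> 'k::comm_ring_1)
    \<Rightarrow> 'a set list \<times> 'a set list \<Rightarrow> 'k" where
  "Delta A B x = (\<lambda>(u, v). \<Sum>c\<in>Comp (A \<union> B). x c * dec A c (u, v))"

definition dlt :: "'a set list \<Rightarrow> 'a set list \<times> 'a set list \<Rightarrow> 'k::comm_ring_1" where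
  "dlt c = (\<lambda>(u, v). \<Sum>(s, t)\<in>cont (length c). if act s c = u \<and> act t c = v then 1 else 0)"

definition delta :: "'a set \<Rightarrow> ('a set list \<Rightarrow> 'k::comm_ring_1) \<Rightarrow> 'a set list \<times> 'a set list \<Rightarrow> 'k" where
  "delta A x = (\<lambda>(u, v). \<Sum>c\<in>Comp A. x c * dlt c (u, v))"

text \<open>Counit epsilon' (with epsilon'(()) = 1 on the unit of Comp[{}]).\<close>
definition eps' :: "'a set list \<Rightarrow> 'k::comm_ring_1" where
  "eps' c = (if length c \<le> 1 then 1 else 0)"

definition epsp :: "'a set \<Rightarrow> ('a set list \<Rightarrow> 'k::comm_ring_1) \<Rightarrow> 'k" where
  "epsp A x = (\<Sum>c\<in>Comp A. x c * eps' c)"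

definition epsD :: "('a set list \<Rightarrow> 'k::comm_ring_1) \<Rightarrow> 'k" where
  "epsD x = x []"

definition delta_id :: "'a set \<Rightarrow> ('a set list \<times> 'a set list \<Rightarrow> 'k::comm_ring_1)
    \<Rightarrow> 'a set list \<times> 'a set list \<times> 'a set list \<Rightarrow> 'k" where
  "delta_id A T = (\<lambda>(u, v, w). \<Sum>(a, b)\<in>Comp A \<times> Comp A.
      T (a, b) * dlt a (u, v) * (if b = w then 1 else 0))"

definition id_delta :: "'a set \<Rightarrow> ('a set list \<times> 'a set list \<Rightarrow> 'k::comm_ring_1)
    \<Rightarrow> 'a set list \<times> 'a set list \<times> 'a set list \<Rightarrow> 'k" where
  "id_delta A T = (\<lambda>(u, v, w). \<Sum>(a, b)\<in>Comp A \<times> Comp A.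
      T (a, b) * (if a = u then 1 else 0) * dlt b (v, w))"

definition eps_id :: "'a set \<Rightarrow> ('a set list \<times> 'a set list \<Rightarrow> 'k::comm_ring_1)
    \<Rightarrow> 'a set list \<Rightarrow> 'k" where
  "eps_id A T = (\<lambda>w. \<Sum>(a, b)\<in>Comp A \<times> Comp A. T (a, b) * eps' a * (if b = w then 1 else 0))"

definition id_eps :: "'a set \<Rightarrow> ('a set list \<times> 'a set list \<Rightarrow> 'k::comm_ring_1)
    \<Rightarrow> 'a set list \<Rightarrow> 'k" where
  "id_eps A T = (\<lambda>w. \<Sum>(a, b)\<in>Comp A \<times> Comp A. T (a, b) * (if a = w then 1 else 0) * eps' b)"

definition epsD_id :: "('a set list \<times> 'a set list \<Rightarrow> 'k::comm_ring_1) \<Rightarrow> 'a set list \<Rightarrow> 'k" where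
  "epsD_id T = (\<lambda>w. \<Sum>(a, b)\<in>Comp {} \<times> Comp {}. T (a, b) * epsD (basis a) * (if b = w then 1 else 0))"

definition Delta_id :: "'a set \<Rightarrow> 'a set \<Rightarrow> ('a set list \<times> 'a set list \<Rightarrow> 'k::comm_ring_1)
    \<Rightarrow> 'a set list \<times> 'a set list \<times> 'a set list \<Rightarrow> 'k" where
  "Delta_id A B T = (\<lambda>(u, v, w). \<Sum>(a, b)\<in>Comp (A \<union> B) \<times> Comp (A \<union> B).
      T (a, b) * dec A a (u, v) * (if b = w then 1 else 0))"

text \<open>m_{1,3,24} o (delta_A (x) delta_B) on Comp[A] (x) Comp[B].\<close>
definition m1324_dd :: "'a set \<Rightarrow> 'a set \<Rightarrow> ('a set list \<times> 'a set list \<Rightarrow> 'k::comm_ring_1)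
    \<Rightarrow> 'a set list \<times> 'a set list \<times> 'a set list \<Rightarrow> 'k" where
  "m1324_dd A B S = (\<lambda>(u, v, w). \<Sum>(a, b)\<in>Comp A \<times> Comp B. \<Sum>(q, r)\<in>Comp A \<times> Comp B.
      S (a, b) * dlt a (u, q) * dlt b (v, r) * qsh q r w)"

definition relab :: "'a set \<Rightarrow> ('a \<Rightarrow> 'a) \<Rightarrow> ('a set list \<Rightarrow> 'k::comm_ring_1) \<Rightarrow> 'a set list \<Rightarrow> 'k" where
  "relab A f x = (\<lambda>z. \<Sum>c\<in>Comp A. x c * (if map ((`) f) c = z then 1 else 0))"

definition relab2 :: "'a set \<Rightarrow> ('a \<Rightarrow> 'a) \<Rightarrow> ('a set list \<times> 'a set list \<Rightarrow> 'k::comm_ring_1)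
    \<Rightarrow> 'a set list \<times> 'a set list \<Rightarrow> 'k" where
  "relab2 A f T = (\<lambda>(u, v). \<Sum>(a, b)\<in>Comp A \<times> Comp A.
      T (a, b) * (if map ((`) f) a = u then 1 else 0) * (if map ((`) f) b = v then 1 else 0))"

text \<open>Ways to cut a composition into consecutive nonempty pieces
  (equivalently, choices of 1 <= i_1 < ... < i_p < k).\<close>
definition splits :: "'a set list \<Rightarrow> 'a set list list set" where
  "splits c = {cs. concat cs = c \<and> (\<forall>b\<in>set cs. b \<noteq> [])}"

end

theory Submission
  imports Defs "HOL-Library.Product_Lexorder"
begin

(*
  A set composition c of A is determined by its block index function, which sends x to the
  index of the block containing x, and even by the strict order this function induces on A.
  In these terms, for a surjection s the composition s -> c is the coarsening of c whose block
  index is s composed with that of c.  A pair (s, t) lies in cont_k exactly when c is the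
  refinement of s -> c by t -> c, the composition whose blocks are the nonempty intersections
  of a block of the first with a block of the second, ordered lexicographically; and the
  quasi-shuffles of c in Comp[A] and d in Comp[B] produce exactly the compositions of the
  disjoint union that restrict to c on A and to d on B.  Hence delta(x)(u, v) = x(u refined
  by v) and (x * y)(z) = x(z|A) y(z|B), and each axiom of a double twisted bialgebra becomes
  an identity between refinements and restrictions: associativity of refinement, the
  one-block composition as its two-sided unit, compatibility of restriction with refinement,
  and (u v) refined by w = (u refined by w|A)(v refined by w|B) for concatenation.
*)

lemma sum_eq_single:
  assumes "finite S" "\<And>p. p \<in> S \<Longrightarrow> p \<noteq> a \<Longrightarrow> g p = 0"
  shows "sum g S = (if a \<in> S then g a else 0)"
proof -
  have "sum g S = (\<Sum>p\<in>S. if p = a then g p else 0)"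
    using assms(2) by (intro sum.cong) auto
  then show ?thesis
    using assms(1) by simp
qed

lemma sum_indicator_unique:
  assumes "finite S" "\<And>p q. p \<in> S \<Longrightarrow> q \<in> S \<Longrightarrow> P p \<Longrightarrow> P q \<Longrightarrow> p = q"
  shows "(\<Sum>p\<in>S. if P p then 1 else 0) = (if \<exists>p\<in>S. P p then 1 else (0::'a::comm_semiring_1))"
proof (cases "\<exists>p\<in>S. P p")
  case True
  then obtain a where "a \<in> S" "P a"
    by blast
  with assms show ?thesis
    by (subst sum_eq_single[where a = a]) auto
qed simp

section \<open>Compositions and block indices\<close>

definition composition :: "'a set list \<Rightarrow> bool" where
  "composition c \<longleftrightarrow> (\<forall>X\<in>set c. X \<noteq> {}) \<and> sorted_wrt (\<lambda>X Y. X \<inter> Y = {}) c"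

lemma composition_Nil [simp]: "composition []"
  by (simp add: composition_def)

lemma composition_Cons [simp]:
  "composition (X # c) \<longleftrightarrow> X \<noteq> {} \<and> X \<inter> \<Union>(set c) = {} \<and> composition c"
  by (auto simp: composition_def)

lemma composition_append:
  "composition (c @ d) \<longleftrightarrow> composition c \<and> composition d \<and> \<Union>(set c) \<inter> \<Union>(set d) = {}"
  by (induction c) auto

lemma Comp_iff: "c \<in> Comp A \<longleftrightarrow> composition c \<and> \<Union>(set c) = A"
  by (auto simp: Comp_def is_comp_def composition_def sorted_wrt_iff_nth_less)

lemma Comp_empty: "Comp {} = {[]}"
  by (auto simp: Comp_iff composition_def)

lemma append_in_Comp: "c \<in> Comp A \<Longrightarrow> d \<in> Comp B \<Longrightarrow> A \<inter> B = {} \<Longrightarrow> c @ d \<in> Comp (A \<union> B)"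
  by (auto simp: Comp_iff composition_append)

lemma append_in_Comp_iff:
  assumes "A \<inter> B = {}"
  shows "c @ d \<in> Comp (A \<union> B) \<and> \<Union>(set c) = A \<longleftrightarrow> c \<in> Comp A \<and> d \<in> Comp B"
  using assms by (simp add: Comp_iff composition_append) blast

fun block_index :: "'a set list \<Rightarrow> 'a \<Rightarrow> nat" where
  "block_index [] x = 0"
| "block_index (X # c) x = (if x \<in> X then 0 else Suc (block_index c x))"

lemma block_index_append:
  "block_index (c @ d) x = (if x \<in> \<Union>(set c) then block_index c x else length c + block_index d x)"
  by (induction c) auto

lemma block_index_append_Comp:
  "c \<in> Comp A \<Longrightarrow> block_index (c @ d) x = (if x \<in> A then block_index c x else length c + block_index d x)"
  by (simp add: block_index_append Comp_iff)

lemma block_index_less: "x \<in> \<Union>(set c) \<Longrightarrow> block_index c x < length c"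
  and mem_block_index: "x \<in> \<Union>(set c) \<Longrightarrow> x \<in> c ! block_index c x"
  by (induction c) auto

lemma block_index_eqI: "composition c \<Longrightarrow> i < length c \<Longrightarrow> x \<in> c ! i \<Longrightarrow> block_index c x = i"
proof (induction c arbitrary: i)
  case (Cons X c)
  then show ?case
    by (cases i) (auto simp: disjoint_iff)
qed simp

lemma block_index_image: "composition c \<Longrightarrow> block_index c ` \<Union>(set c) = {..<length c}"
proof (intro equalityI subsetI)
  fix i assume c: "composition c" and "i \<in> {..<length c}"
  then have i: "i < length c" by simp
  then obtain x where "x \<in> c ! i"
    using c by (metis all_not_in_conv composition_def nth_mem)
  with c i show "i \<in> block_index c ` \<Union>(set c)"
    using block_index_eqI by (metis UnionI image_eqI nth_mem)
qed (auto intro: block_index_less)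

lemma nth_Comp_eq: "c \<in> Comp A \<Longrightarrow> i < length c \<Longrightarrow> c ! i = {x \<in> A. block_index c x = i}"
  unfolding Comp_iff using block_index_eqI mem_block_index by fastforce

lemma Comp_eqI:
  assumes "c \<in> Comp A" "c' \<in> Comp A" "\<And>x. x \<in> A \<Longrightarrow> block_index c x = block_index c' x"
  shows "c = c'"
proof -
  have "length c = length c'"
    using assms block_index_image[of c] block_index_image[of c'] image_cong
    by (metis Comp_iff card_lessThan)
  then show ?thesis
    using assms by (auto intro: nth_equalityI simp: nth_Comp_eq)
qed

lemma finite_Comp: "finite A \<Longrightarrow> finite (Comp A)"
proof (rule finite_subset)
  assume "finite A"
  show "Comp A \<subseteq> {c. set c \<subseteq> Pow A \<and> length c \<le> card A}"
  proof safe
    fix c assume c: "c \<in> Comp A"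
    then show "length c \<le> card A"
      using block_index_image[of c] card_image_le[OF \<open>finite A\<close>, of "block_index c"]
      by (simp add: Comp_iff)
  qed (auto simp: Comp_iff)
  show "finite {c. set c \<subseteq> Pow A \<and> length c \<le> card A}"
    using \<open>finite A\<close> by (intro finite_lists_length_le) auto
qed

definition one_block :: "'a set \<Rightarrow> 'a set list" where
  "one_block A = (if A = {} then [] else [A])"

lemma one_block_in_Comp: "one_block A \<in> Comp A"
  by (simp add: one_block_def Comp_iff)

lemma Comp_length_le_1_iff: "c \<in> Comp A \<Longrightarrow> length c \<le> 1 \<longleftrightarrow> c = one_block A"
  by (cases c) (auto simp: Comp_iff one_block_def)

definition same_order_on :: "'a set \<Rightarrow> ('a \<Rightarrow> 'b::ord) \<Rightarrow> ('a \<Rightarrow> 'c::ord) \<Rightarrow> bool" where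
  "same_order_on A f g \<longleftrightarrow> (\<forall>x\<in>A. \<forall>y\<in>A. f x < f y \<longleftrightarrow> g x < g y)"

lemma same_order_on_refl: "same_order_on A f f"
  and same_order_on_sym: "same_order_on A f g \<Longrightarrow> same_order_on A g f"
  and same_order_on_trans: "same_order_on A f g \<Longrightarrow> same_order_on A g h \<Longrightarrow> same_order_on A f h"
  and same_order_on_subset: "same_order_on A f g \<Longrightarrow> B \<subseteq> A \<Longrightarrow> same_order_on B f g"
  by (auto simp: same_order_on_def)

lemma same_order_on_eq:
  fixes f :: "'a \<Rightarrow> 'b::linorder" and g :: "'a \<Rightarrow> 'c::linorder"
  shows "same_order_on A f g \<Longrightarrow> x \<in> A \<Longrightarrow> y \<in> A \<Longrightarrow> f x = f y \<longleftrightarrow> g x = g y"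
  unfolding same_order_on_def by (metis linorder_neq_iff)

lemma same_order_on_pair:
  fixes f :: "'a \<Rightarrow> 'b::linorder" and f' :: "'a \<Rightarrow> 'c::linorder"
    and g :: "'a \<Rightarrow> 'd::linorder" and g' :: "'a \<Rightarrow> 'e::linorder"
  assumes "same_order_on A f f'" "same_order_on A g g'"
  shows "same_order_on A (\<lambda>x. (f x, g x)) (\<lambda>x. (f' x, g' x))"
  using assms same_order_on_eq[OF assms(1)]
  unfolding same_order_on_def less_prod_def' by auto

lemma card_image_eq_if_same_fibres:
  assumes "\<And>x y. x \<in> S \<Longrightarrow> y \<in> S \<Longrightarrow> f x = f y \<longleftrightarrow> g x = g y"
  shows "card (f ` S) = card (g ` S)"
proof -
  define h where "h i = g (inv_into S f i)" for i
  have g_eq: "g x = h (f x)" if "x \<in> S" for x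
  proof -
    have "inv_into S f (f x) \<in> S" "f (inv_into S f (f x)) = f x"
      using that by (auto intro: inv_into_into f_inv_into_f)
    with assms that show ?thesis
      by (simp add: h_def)
  qed
  then have "g ` S = h ` f ` S"
    by (simp add: image_image)
  moreover have "inj_on h (f ` S)"
    using assms g_eq by (auto intro!: inj_onI)
  ultimately show ?thesis
    by (simp add: card_image)
qed

lemma Comp_eq_if_same_order:
  assumes c: "c \<in> Comp A" and c': "c' \<in> Comp A"
    and ord: "same_order_on A (block_index c) (block_index c')"
  shows "c = c'"
proof (rule Comp_eqI[OF c c'])
  \<comment> \<open>The block index of x is the number of block indices below it.\<close>
  fix x assume x: "x \<in> A"
  define S where "S = {y \<in> A. block_index c y < block_index c x}"
  have S': "S = {y \<in> A. block_index c' y < block_index c' x}"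
    using ord x by (auto simp: S_def same_order_on_def)
  have before: "block_index d ` {y \<in> A. block_index d y < block_index d x} = {..<block_index d x}"
    if "d \<in> Comp A" for d :: "'a set list"
  proof -
    have "block_index d ` {y \<in> A. block_index d y < block_index d x} =
        block_index d ` A \<inter> {..<block_index d x}"
      by auto
    then show ?thesis
      using that x block_index_image[of d] block_index_less[of x d] by (auto simp: Comp_iff)
  qed
  have "card (block_index c ` S) = card (block_index c' ` S)"
    using same_order_on_eq[OF ord] by (intro card_image_eq_if_same_fibres) (auto simp: S_def)
  then show "block_index c x = block_index c' x"
    using before[OF c] before[OF c'] by (simp add: S_def flip: S')
qed

lemma Comp_eq_if_same_order':
  fixes F :: "'a \<Rightarrow> 'b::linorder"
  assumes "c \<in> Comp A" "c' \<in> Comp A"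
    and "same_order_on A (block_index c) F" "same_order_on A (block_index c') F"
  shows "c = c'"
  using assms by (meson Comp_eq_if_same_order same_order_on_sym same_order_on_trans)

section \<open>Restriction and refinement\<close>

definition comp_restrict :: "'a set list \<Rightarrow> 'a set \<Rightarrow> 'a set list" where
  "comp_restrict v X = filter (\<lambda>Y. Y \<noteq> {}) (map (\<lambda>Y. Y \<inter> X) v)"

lemma comp_restrict_Nil [simp]: "comp_restrict [] X = []"
  and comp_restrict_Cons:
    "comp_restrict (Y # v) X = (if Y \<inter> X = {} then comp_restrict v X else (Y \<inter> X) # comp_restrict v X)"
  by (simp_all add: comp_restrict_def)

lemma Union_comp_restrict [simp]: "\<Union>(set (comp_restrict v X)) = \<Union>(set v) \<inter> X"
  by (induction v) (auto simp: comp_restrict_Cons)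

lemma composition_comp_restrict: "composition v \<Longrightarrow> composition (comp_restrict v X)"
  by (induction v) (auto simp: comp_restrict_Cons)

lemma comp_restrict_in_Comp: "v \<in> Comp A \<Longrightarrow> X \<subseteq> A \<Longrightarrow> comp_restrict v X \<in> Comp X"
  by (auto simp: Comp_iff composition_comp_restrict)

lemma comp_restrict_in_Comp_Un:
  "z \<in> Comp (A \<union> B) \<Longrightarrow> comp_restrict z A \<in> Comp A"
  "z \<in> Comp (A \<union> B) \<Longrightarrow> comp_restrict z B \<in> Comp B"
  by (simp_all add: comp_restrict_in_Comp)

lemma comp_restrict_comp_restrict: "X \<subseteq> B \<Longrightarrow> comp_restrict (comp_restrict v B) X = comp_restrict v X"
  by (induction v) (auto simp: comp_restrict_Cons)

lemma comp_restrict_id: "composition v \<Longrightarrow> \<Union>(set v) \<subseteq> A \<Longrightarrow> comp_restrict v A = v"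
  by (induction v) (auto simp: comp_restrict_Cons Int_absorb2)

lemma same_order_comp_restrict:
  "composition v \<Longrightarrow> same_order_on (\<Union>(set v) \<inter> X) (block_index (comp_restrict v X)) (block_index v)"
proof (induction v)
  case (Cons Y v)
  then have IH: "same_order_on (\<Union>(set v) \<inter> X) (block_index (comp_restrict v X)) (block_index v)"
    by simp
  show ?case
    unfolding same_order_on_def
  proof (intro ballI)
    fix x y assume "x \<in> \<Union>(set (Y # v)) \<inter> X" "y \<in> \<Union>(set (Y # v)) \<inter> X"
    then consider "x \<in> Y" "y \<in> Y" | "x \<in> Y" "y \<notin> Y" | "x \<notin> Y" "y \<in> Y"
      | "x \<notin> Y" "y \<notin> Y" "x \<in> \<Union>(set v) \<inter> X" "y \<in> \<Union>(set v) \<inter> X"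
      by auto
    then show "block_index (comp_restrict (Y # v) X) x < block_index (comp_restrict (Y # v) X) y
        \<longleftrightarrow> block_index (Y # v) x < block_index (Y # v) y"
      using IH \<open>x \<in> _\<close> \<open>y \<in> _\<close>
      by cases (auto simp: comp_restrict_Cons same_order_on_def)
  qed
qed (simp add: same_order_on_def)

lemma same_order_comp_restrict':
  "v \<in> Comp A \<Longrightarrow> X \<subseteq> A \<Longrightarrow> same_order_on X (block_index (comp_restrict v X)) (block_index v)"
  using same_order_comp_restrict[of v X] by (auto simp: Comp_iff Int_absorb1)

lemma comp_restrict_eq_iff_same_order:
  assumes z: "z \<in> Comp C" and c: "c \<in> Comp A" and A: "A \<subseteq> C"
  shows "comp_restrict z A = c \<longleftrightarrow> same_order_on A (block_index c) (block_index z)"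
  using Comp_eq_if_same_order'[OF comp_restrict_in_Comp[OF z A] c] same_order_comp_restrict'[OF z A]
  by auto

definition refine :: "'a set list \<Rightarrow> 'a set list \<Rightarrow> 'a set list" where
  "refine u v = concat (map (comp_restrict v) u)"

lemma refine_Nil [simp]: "refine [] v = []"
  and refine_Cons: "refine (X # u) v = comp_restrict v X @ refine u v"
  and refine_append: "refine (u @ w) v = refine u v @ refine w v"
  by (simp_all add: refine_def)

lemma Union_refine: "\<Union>(set u) \<subseteq> \<Union>(set v) \<Longrightarrow> \<Union>(set (refine u v)) = \<Union>(set u)"
  by (induction u) (auto simp: refine_Cons)

lemma composition_refine:
  "composition u \<Longrightarrow> composition v \<Longrightarrow> \<Union>(set u) \<subseteq> \<Union>(set v) \<Longrightarrow> composition (refine u v)"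
proof (induction u)
  case (Cons X u)
  then show ?case
    using composition_comp_restrict[of v X] Union_refine[of u v]
    by (auto simp: refine_Cons composition_append)
qed simp

lemma refine_in_Comp: "u \<in> Comp A \<Longrightarrow> v \<in> Comp A \<Longrightarrow> refine u v \<in> Comp A"
  by (simp add: Comp_iff composition_refine Union_refine)

lemma same_order_refine:
  "composition u \<Longrightarrow> composition v \<Longrightarrow> \<Union>(set u) \<subseteq> \<Union>(set v) \<Longrightarrow>
    same_order_on (\<Union>(set u)) (block_index (refine u v)) (\<lambda>x. (block_index u x, block_index v x))"
proof (induction u)
  case (Cons X u)
  then have IH: "same_order_on (\<Union>(set u)) (block_index (refine u v)) (\<lambda>x. (block_index u x, block_index v x))"
    and X: "X \<subseteq> \<Union>(set v)"
    by auto
  have UX: "\<Union>(set (comp_restrict v X)) = X"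
    using X by auto
  have RX: "same_order_on X (block_index (comp_restrict v X)) (block_index v)"
    using same_order_comp_restrict[OF \<open>composition v\<close>, of X] X by (simp add: Int_absorb1)
  have less: "block_index (comp_restrict v X) x < length (comp_restrict v X)" if "x \<in> X" for x
    using block_index_less[of x "comp_restrict v X"] UX that by metis
  have index: "block_index (refine (X # u) v) x =
      (if x \<in> X then block_index (comp_restrict v X) x
       else length (comp_restrict v X) + block_index (refine u v) x)" for x
    using X by (auto simp: refine_Cons block_index_append)
  show ?case
    unfolding same_order_on_def
  proof (intro ballI)
    fix x y assume "x \<in> \<Union>(set (X # u))" "y \<in> \<Union>(set (X # u))"
    then consider "x \<in> X" "y \<in> X" | "x \<in> X" "y \<notin> X" | "x \<notin> X" "y \<in> X"
      | "x \<notin> X" "y \<notin> X" "x \<in> \<Union>(set u)" "y \<in> \<Union>(set u)"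
      by auto
    then show "block_index (refine (X # u) v) x < block_index (refine (X # u) v) y \<longleftrightarrow>
        (block_index (X # u) x, block_index v x) < (block_index (X # u) y, block_index v y)"
    proof cases
      case 1
      with RX show ?thesis by (simp add: index less_prod_def' same_order_on_def)
    next
      case 2
      with less[of x] show ?thesis by (simp add: index less_prod_def')
    next
      case 3
      with less[of y] show ?thesis by (simp add: index less_prod_def')
    next
      case 4
      with IH have "block_index (refine u v) x < block_index (refine u v) y \<longleftrightarrow>
          (block_index u x, block_index v x) < (block_index u y, block_index v y)"
        unfolding same_order_on_def by blast
      with 4 show ?thesis by (simp add: index less_prod_def')
    qed
  qed
qed (simp add: same_order_on_def)

lemma same_order_refine':
  "u \<in> Comp A \<Longrightarrow> v \<in> Comp A \<Longrightarrow>
    same_order_on A (block_index (refine u v)) (\<lambda>x. (block_index u x, block_index v x))"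
  using same_order_refine[of u v] by (simp add: Comp_iff)

lemma block_index_refine_eq_iff:
  assumes "u \<in> Comp A" "v \<in> Comp A" "x \<in> A" "y \<in> A"
  shows "block_index (refine u v) x = block_index (refine u v) y \<longleftrightarrow>
    block_index u x = block_index u y \<and> block_index v x = block_index v y"
  using same_order_on_eq[OF same_order_refine'[OF assms(1,2)] assms(3,4)] by simp

lemma refine_assoc:
  assumes u: "u \<in> Comp A" and v: "v \<in> Comp A" and w: "w \<in> Comp A"
  shows "refine (refine u v) w = refine u (refine v w)"
proof (rule Comp_eq_if_same_order'[where F = "\<lambda>x. (block_index u x, block_index v x, block_index w x)"])
  have uv: "refine u v \<in> Comp A" and vw: "refine v w \<in> Comp A"
    using u v w by (auto intro: refine_in_Comp)
  show "refine (refine u v) w \<in> Comp A" "refine u (refine v w) \<in> Comp A"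
    using u v w uv vw by (auto intro: refine_in_Comp)
  have assoc: "same_order_on A (\<lambda>x. ((block_index u x, block_index v x), block_index w x))
      (\<lambda>x. (block_index u x, block_index v x, block_index w x))"
    by (auto simp: same_order_on_def less_prod_def')
  show "same_order_on A (block_index (refine (refine u v) w))
      (\<lambda>x. (block_index u x, block_index v x, block_index w x))"
    using same_order_on_trans[OF same_order_on_trans[OF same_order_refine'[OF uv w]
        same_order_on_pair[OF same_order_refine'[OF u v] same_order_on_refl]] assoc] .
  show "same_order_on A (block_index (refine u (refine v w)))
      (\<lambda>x. (block_index u x, block_index v x, block_index w x))"
    using same_order_on_trans[OF same_order_refine'[OF u vw] same_order_on_pair
        [OF same_order_on_refl same_order_refine'[OF v w]]] .
qed

lemma comp_restrict_refine:
  assumes u: "u \<in> Comp C" and v: "v \<in> Comp C" and X: "X \<subseteq> C"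
  shows "comp_restrict (refine u v) X = refine (comp_restrict u X) (comp_restrict v X)"
proof (rule Comp_eq_if_same_order'[where F = "\<lambda>x. (block_index u x, block_index v x)"])
  have uv: "refine u v \<in> Comp C" and ru: "comp_restrict u X \<in> Comp X" and rv: "comp_restrict v X \<in> Comp X"
    using u v X by (auto intro: refine_in_Comp comp_restrict_in_Comp)
  show "comp_restrict (refine u v) X \<in> Comp X" "refine (comp_restrict u X) (comp_restrict v X) \<in> Comp X"
    using uv ru rv X by (auto intro: refine_in_Comp comp_restrict_in_Comp)
  show "same_order_on X (block_index (comp_restrict (refine u v) X))
      (\<lambda>x. (block_index u x, block_index v x))"
    using same_order_on_trans[OF same_order_comp_restrict'[OF uv X]
        same_order_on_subset[OF same_order_refine'[OF u v] X]] .
  show "same_order_on X (block_index (refine (comp_restrict u X) (comp_restrict v X)))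
      (\<lambda>x. (block_index u x, block_index v x))"
    using same_order_on_trans[OF same_order_refine'[OF ru rv] same_order_on_pair
        [OF same_order_comp_restrict'[OF u X] same_order_comp_restrict'[OF v X]]] .
qed

lemma refine_comp_restrict: "\<Union>(set u) \<subseteq> A \<Longrightarrow> refine u (comp_restrict w A) = refine u w"
  by (induction u) (auto simp: refine_Cons comp_restrict_comp_restrict)

lemma refine_one_block_left: "w \<in> Comp A \<Longrightarrow> refine (one_block A) w = w"
  by (cases "A = {}") (auto simp: one_block_def refine_Cons Comp_empty Comp_iff comp_restrict_id)

lemma refine_one_block_right:
  assumes "w \<in> Comp A"
  shows "refine w (one_block A) = w"
proof -
  have "composition w \<Longrightarrow> \<Union>(set w) \<subseteq> A \<Longrightarrow> refine w (one_block A) = w"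
    by (induction w) (auto simp: one_block_def refine_Cons comp_restrict_Cons Int_absorb1)
  with assms show ?thesis
    by (simp add: Comp_iff)
qed

lemma comp_restrict_one_block: "A \<subseteq> C \<Longrightarrow> comp_restrict (one_block C) A = one_block A"
  by (auto simp: one_block_def comp_restrict_Cons Int_absorb1)

section \<open>Surjections acting on compositions\<close>

lemma mem_set_if_surj: "is_surj s \<Longrightarrow> j \<in> set s \<longleftrightarrow> j < card (set s)"
  unfolding is_surj_def by (metis lessThan_iff)

lemma length_act: "length (act s c) = card (set s)"
  by (simp add: act_def)

lemma surj_nth_block_index_less:
  assumes c: "c \<in> Comp A" and s: "is_surj s" "length s = length c" and x: "x \<in> A"
  shows "s ! block_index c x < length (act s c)"
proof -
  have "block_index c x < length s"
    using c s x block_index_less[of x c] by (simp add: Comp_iff)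
  then have "s ! block_index c x \<in> set s"
    by simp
  then show ?thesis
    using mem_set_if_surj[OF s(1)] by (simp add: length_act)
qed

lemma mem_act_nth:
  assumes c: "c \<in> Comp A" and s: "length s = length c" and j: "j < length (act s c)"
  shows "x \<in> act s c ! j \<longleftrightarrow> x \<in> A \<and> s ! block_index c x = j"
proof -
  have "x \<in> act s c ! j \<longleftrightarrow> (\<exists>i < length c. s ! i = j \<and> x \<in> c ! i)"
    using j s by (auto simp: act_def)
  also have "\<dots> \<longleftrightarrow> x \<in> A \<and> s ! block_index c x = j"
  proof
    assume "\<exists>i < length c. s ! i = j \<and> x \<in> c ! i"
    then obtain i where "i < length c" "s ! i = j" "x \<in> c ! i"
      by blast
    with c show "x \<in> A \<and> s ! block_index c x = j"
      by (simp add: nth_Comp_eq)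
  next
    assume x: "x \<in> A \<and> s ! block_index c x = j"
    then have "block_index c x < length c" "x \<in> c ! block_index c x"
      using c by (auto simp: Comp_iff block_index_less mem_block_index)
    with x show "\<exists>i < length c. s ! i = j \<and> x \<in> c ! i"
      by blast
  qed
  finally show ?thesis .
qed

lemma act_in_Comp:
  assumes c: "c \<in> Comp A" and s: "is_surj s" "length s = length c"
  shows "act s c \<in> Comp A"
  unfolding Comp_def is_comp_def mem_Collect_eq
proof (intro conjI allI impI ballI)
  fix X assume "X \<in> set (act s c)"
  then obtain j where j: "j < length (act s c)" "X = act s c ! j"
    by (auto simp: in_set_conv_nth)
  then obtain i where i: "i < length c" "s ! i = j"
    using s mem_set_if_surj[OF s(1), of j] by (auto simp: in_set_conv_nth length_act)
  then obtain x where "x \<in> c ! i"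
    using c by (metis Comp_iff all_not_in_conv composition_def nth_mem)
  then show "X \<noteq> {}"
    using c s i j by (auto simp: mem_act_nth nth_Comp_eq)
next
  fix j1 j2 assume "j1 < j2 \<and> j2 < length (act s c)"
  then show "act s c ! j1 \<inter> act s c ! j2 = {}"
    using c s by (auto simp: mem_act_nth)
next
  show "\<Union>(set (act s c)) = A"
  proof
    show "\<Union>(set (act s c)) \<subseteq> A"
      using c s by (auto simp: in_set_conv_nth mem_act_nth)
    show "A \<subseteq> \<Union>(set (act s c))"
    proof
      fix x assume x: "x \<in> A"
      have j: "s ! block_index c x < length (act s c)"
        by (rule surj_nth_block_index_less[OF c s x])
      with c s x have "x \<in> act s c ! (s ! block_index c x)"
        by (simp add: mem_act_nth)
      with j show "x \<in> \<Union>(set (act s c))"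
        by (meson UnionI nth_mem)
    qed
  qed
qed

lemma block_index_act:
  assumes c: "c \<in> Comp A" and s: "is_surj s" "length s = length c" and x: "x \<in> A"
  shows "block_index (act s c) x = s ! block_index c x"
proof (rule block_index_eqI)
  show "composition (act s c)"
    using act_in_Comp[OF c s] by (simp add: Comp_iff)
  show "s ! block_index c x < length (act s c)"
    by (rule surj_nth_block_index_less[OF c s x])
  then show "x \<in> act s c ! (s ! block_index c x)"
    using c s x by (simp add: mem_act_nth)
qed

lemma act_inj:
  assumes c: "c \<in> Comp A" and s: "is_surj s" "length s = length c"
    and s': "is_surj s'" "length s' = length c" and eq: "act s c = act s' c"
  shows "s = s'"
proof (rule nth_equalityI)
  fix i assume "i < length s"
  then have "i \<in> block_index c ` A"
    using c s block_index_image[of c] by (simp add: Comp_iff)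
  then obtain x where "x \<in> A" "block_index c x = i"
    by blast
  then show "s ! i = s' ! i"
    using block_index_act[OF c s] block_index_act[OF c s'] eq by metis
qed (use s s' in simp)

lemma ex_act_if_coarser:
  assumes c: "c \<in> Comp A" and u: "u \<in> Comp A"
    and coarser: "\<And>x y. x \<in> A \<Longrightarrow> y \<in> A \<Longrightarrow> block_index c x = block_index c y \<Longrightarrow>
      block_index u x = block_index u y"
  obtains s where "is_surj s" "length s = length c" "act s c = u"
proof -
  define s where "s = map (\<lambda>i. block_index u (SOME x. x \<in> c ! i)) [0..<length c]"
  have s_index: "s ! block_index c x = block_index u x" if x: "x \<in> A" for x
  proof -
    let ?i = "block_index c x"
    have "?i < length c" "x \<in> c ! ?i"
      using c x by (auto simp: Comp_iff block_index_less mem_block_index)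
    then have "(SOME y. y \<in> c ! ?i) \<in> c ! ?i"
      by (metis someI)
    then have "(SOME y. y \<in> c ! ?i) \<in> A" "block_index c (SOME y. y \<in> c ! ?i) = ?i"
      using c \<open>?i < length c\<close> by (simp_all add: nth_Comp_eq)
    then have "block_index u (SOME y. y \<in> c ! ?i) = block_index u x"
      using coarser x by blast
    then show ?thesis
      using \<open>?i < length c\<close> by (simp add: s_def)
  qed
  have len: "length s = length c"
    by (simp add: s_def)
  have "set s = (!) s ` {..<length c}"
    using len by (auto simp: set_conv_nth)
  also have "\<dots> = (!) s ` block_index c ` A"
    using c block_index_image[of c] by (simp add: Comp_iff)
  also have "\<dots> = block_index u ` A"
    unfolding image_image using s_index by (intro image_cong) auto
  also have "\<dots> = {..<length u}"
    using u block_index_image[of u] by (simp add: Comp_iff)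
  finally have surj: "is_surj s"
    unfolding is_surj_def by simp
  have "act s c = u"
    using s_index by (intro Comp_eqI[OF act_in_Comp[OF c surj len] u]) (simp add: block_index_act[OF c surj len])
  with surj len that show ?thesis
    by blast
qed

lemma strict_mono_iff_same_order:
  fixes g :: "nat \<Rightarrow> 'b::linorder"
  assumes c: "c \<in> Comp A"
  shows "(\<forall>i j. i < j \<longrightarrow> j < length c \<longrightarrow> g i < g j) \<longleftrightarrow>
    same_order_on A (block_index c) (\<lambda>x. g (block_index c x))"
proof
  assume mono: "\<forall>i j. i < j \<longrightarrow> j < length c \<longrightarrow> g i < g j"
  have "i < j \<longleftrightarrow> g i < g j" if "i < length c" "j < length c" for i j
    using mono that by (metis linorder_neq_iff order_less_asym)
  then show "same_order_on A (block_index c) (\<lambda>x. g (block_index c x))"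
    using c by (auto simp: same_order_on_def Comp_iff block_index_less)
next
  assume ord: "same_order_on A (block_index c) (\<lambda>x. g (block_index c x))"
  show "\<forall>i j. i < j \<longrightarrow> j < length c \<longrightarrow> g i < g j"
  proof (intro allI impI)
    fix i j assume "i < j" "j < length c"
    moreover obtain x y where "x \<in> A" "block_index c x = i" "y \<in> A" "block_index c y = j"
      using c block_index_image[of c] \<open>i < j\<close> \<open>j < length c\<close>
      by (metis Comp_iff imageE lessThan_iff order.strict_trans)
    ultimately show "g i < g j"
      using ord by (auto simp: same_order_on_def)
  qed
qed

lemma finite_surjections: "finite {s. length s = k \<and> is_surj s}"
proof (rule finite_subset)
  show "{s. length s = k \<and> is_surj s} \<subseteq> {s. set s \<subseteq> {..<k} \<and> length s = k}"
    using card_length order_less_le_trans by (fastforce simp: mem_set_if_surj)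
qed (simp add: finite_lists_length_eq)

lemma cont_iff:
  "(s, t) \<in> cont k \<longleftrightarrow> length s = k \<and> length t = k \<and> is_surj s \<and> is_surj t \<and>
    (\<forall>i j. i < j \<longrightarrow> j < k \<longrightarrow> (s ! i, t ! i) < (s ! j, t ! j))"
  unfolding cont_def by (auto simp: sorted_iff_nth_mono_less less_prod_def' le_less; metis less_irrefl)

lemma QSh_iff:
  "s \<in> QSh k l \<longleftrightarrow> length s = k + l \<and> is_surj s \<and>
    (\<forall>i j. i < j \<longrightarrow> j < k \<longrightarrow> s ! i < s ! j) \<and> (\<forall>i j. i < j \<longrightarrow> j < l \<longrightarrow> s ! (k + i) < s ! (k + j))"
  unfolding QSh_def by (auto simp: sorted_wrt_iff_nth_less)

lemma finite_cont: "finite (cont k)"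
  by (rule finite_subset[OF _ finite_cartesian_product[OF finite_surjections[of k] finite_surjections[of k]]])
    (auto simp: cont_def)

lemma finite_QSh: "finite (QSh k l)"
  by (rule finite_subset[OF _ finite_surjections]) (auto simp: QSh_def)

lemma cont_iff_refine:
  assumes c: "c \<in> Comp A" and s: "is_surj s" "length s = length c" and t: "is_surj t" "length t = length c"
  shows "(s, t) \<in> cont (length c) \<longleftrightarrow> c = refine (act s c) (act t c)"
proof -
  have u: "act s c \<in> Comp A" and v: "act t c \<in> Comp A"
    using act_in_Comp[OF c] s t by auto
  have "(s, t) \<in> cont (length c) \<longleftrightarrow> (\<forall>i j. i < j \<longrightarrow> j < length c \<longrightarrow> (s ! i, t ! i) < (s ! j, t ! j))"
    using s t by (simp add: cont_iff)
  also have "\<dots> \<longleftrightarrow> same_order_on A (block_index c) (\<lambda>x. (s ! block_index c x, t ! block_index c x))"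
    by (rule strict_mono_iff_same_order[OF c])
  also have "\<dots> \<longleftrightarrow> same_order_on A (block_index c) (\<lambda>x. (block_index (act s c) x, block_index (act t c) x))"
    using block_index_act[OF c s] block_index_act[OF c t] by (simp add: same_order_on_def)
  also have "\<dots> \<longleftrightarrow> c = refine (act s c) (act t c)"
    using Comp_eq_if_same_order'[OF c refine_in_Comp[OF u v] _ same_order_refine'[OF u v]]
      same_order_refine'[OF u v] by auto
  finally show ?thesis .
qed

lemma dlt_eq:
  assumes c: "c \<in> Comp A"
  shows "dlt c (u, v) = (if u \<in> Comp A \<and> v \<in> Comp A \<and> c = refine u v then 1 else 0)"
proof -
  have "dlt c (u, v) = (\<Sum>p\<in>cont (length c). if act (fst p) c = u \<and> act (snd p) c = v then 1 else 0)"
    by (simp add: dlt_def split_beta)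
  also have "\<dots> = (if \<exists>p\<in>cont (length c). act (fst p) c = u \<and> act (snd p) c = v then 1 else 0)"
    by (rule sum_indicator_unique[OF finite_cont]) (auto simp: cont_iff intro: act_inj[OF c])
  also have "(\<exists>p\<in>cont (length c). act (fst p) c = u \<and> act (snd p) c = v) \<longleftrightarrow>
      u \<in> Comp A \<and> v \<in> Comp A \<and> c = refine u v"
  proof
    assume "\<exists>p\<in>cont (length c). act (fst p) c = u \<and> act (snd p) c = v"
    then obtain s t where "(s, t) \<in> cont (length c)" "act s c = u" "act t c = v"
      by auto
    then show "u \<in> Comp A \<and> v \<in> Comp A \<and> c = refine u v"
      using cont_iff_refine[OF c] act_in_Comp[OF c] by (auto simp: cont_iff)
  next
    assume uv: "u \<in> Comp A \<and> v \<in> Comp A \<and> c = refine u v"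
    then have coarser: "block_index u x = block_index u y" "block_index v x = block_index v y"
      if "x \<in> A" "y \<in> A" "block_index c x = block_index c y" for x y
      using that block_index_refine_eq_iff[of u A v x y] by auto
    obtain s where "is_surj s" "length s = length c" "act s c = u"
      using ex_act_if_coarser[OF c _ coarser(1)] uv by blast
    moreover obtain t where "is_surj t" "length t = length c" "act t c = v"
      using ex_act_if_coarser[OF c _ coarser(2)] uv by blast
    ultimately show "\<exists>p\<in>cont (length c). act (fst p) c = u \<and> act (snd p) c = v"
      using cont_iff_refine[OF c] uv by (intro bexI[of _ "(s, t)"]) auto
  qed
  finally show ?thesis .
qed

lemma dlt_refine: "u \<in> Comp A \<Longrightarrow> v \<in> Comp A \<Longrightarrow> dlt (refine u v) (u, v) = 1"
  by (simp add: dlt_eq[OF refine_in_Comp])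

lemma QSh_iff_comp_restrict:
  assumes c: "c \<in> Comp A" and d: "d \<in> Comp B" and AB: "A \<inter> B = {}"
    and s: "is_surj s" "length s = length (c @ d)"
  shows "s \<in> QSh (length c) (length d) \<longleftrightarrow>
    comp_restrict (act s (c @ d)) A = c \<and> comp_restrict (act s (c @ d)) B = d"
proof -
  let ?k = "length c" and ?l = "length d" and ?z = "act s (c @ d)"
  have e: "c @ d \<in> Comp (A \<union> B)"
    using c d AB by (rule append_in_Comp)
  have z: "?z \<in> Comp (A \<union> B)"
    by (rule act_in_Comp[OF e s])
  have index_A: "block_index ?z x = s ! block_index c x" if "x \<in> A" for x
    using block_index_act[OF e s] that by (simp add: block_index_append_Comp[OF c])
  have index_B: "block_index ?z x = s ! (?k + block_index d x)" if "x \<in> B" for x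
    using block_index_act[OF e s] that AB by (auto simp: block_index_append_Comp[OF c])
  have "(\<forall>i j. i < j \<longrightarrow> j < ?k \<longrightarrow> s ! i < s ! j) \<longleftrightarrow>
      same_order_on A (block_index c) (\<lambda>x. s ! block_index c x)"
    by (rule strict_mono_iff_same_order[OF c])
  also have "\<dots> \<longleftrightarrow> same_order_on A (block_index c) (block_index ?z)"
    by (simp add: same_order_on_def index_A)
  also have "\<dots> \<longleftrightarrow> comp_restrict ?z A = c"
    using comp_restrict_eq_iff_same_order[OF z c] by simp
  finally have first: "(\<forall>i j. i < j \<longrightarrow> j < ?k \<longrightarrow> s ! i < s ! j) \<longleftrightarrow> comp_restrict ?z A = c" .
  have "(\<forall>i j. i < j \<longrightarrow> j < ?l \<longrightarrow> s ! (?k + i) < s ! (?k + j)) \<longleftrightarrow>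
      same_order_on B (block_index d) (\<lambda>x. s ! (?k + block_index d x))"
    by (rule strict_mono_iff_same_order[OF d])
  also have "\<dots> \<longleftrightarrow> same_order_on B (block_index d) (block_index ?z)"
    by (simp add: same_order_on_def index_B)
  also have "\<dots> \<longleftrightarrow> comp_restrict ?z B = d"
    using comp_restrict_eq_iff_same_order[OF z d] by simp
  finally have second: "(\<forall>i j. i < j \<longrightarrow> j < ?l \<longrightarrow> s ! (?k + i) < s ! (?k + j)) \<longleftrightarrow>
      comp_restrict ?z B = d" .
  show ?thesis
    using s first second by (simp add: QSh_iff)
qed

lemma qsh_eq:
  assumes c: "c \<in> Comp A" and d: "d \<in> Comp B" and AB: "A \<inter> B = {}"
  shows "qsh c d z = (if z \<in> Comp (A \<union> B) \<and> comp_restrict z A = c \<and> comp_restrict z B = d then 1 else 0)"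
proof -
  let ?k = "length c" and ?l = "length d"
  have e: "c @ d \<in> Comp (A \<union> B)"
    using c d AB by (rule append_in_Comp)
  have "qsh c d z = (\<Sum>s\<in>QSh ?k ?l. if act s (c @ d) = z then 1 else 0)"
    by (simp add: qsh_def)
  also have "\<dots> = (if \<exists>s\<in>QSh ?k ?l. act s (c @ d) = z then 1 else 0)"
    by (rule sum_indicator_unique[OF finite_QSh]) (auto simp: QSh_iff intro: act_inj[OF e])
  also have "(\<exists>s\<in>QSh ?k ?l. act s (c @ d) = z) \<longleftrightarrow>
      z \<in> Comp (A \<union> B) \<and> comp_restrict z A = c \<and> comp_restrict z B = d"
  proof
    assume "\<exists>s\<in>QSh ?k ?l. act s (c @ d) = z"
    then obtain s where s: "s \<in> QSh ?k ?l" "act s (c @ d) = z"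
      by blast
    then have "is_surj s" "length s = length (c @ d)"
      by (auto simp: QSh_iff)
    with s show "z \<in> Comp (A \<union> B) \<and> comp_restrict z A = c \<and> comp_restrict z B = d"
      using QSh_iff_comp_restrict[OF c d AB] act_in_Comp[OF e] by auto
  next
    assume z: "z \<in> Comp (A \<union> B) \<and> comp_restrict z A = c \<and> comp_restrict z B = d"
    then have ord: "same_order_on A (block_index c) (block_index z)"
      "same_order_on B (block_index d) (block_index z)"
      using comp_restrict_eq_iff_same_order[of z "A \<union> B"] c d by auto
    have "block_index z x = block_index z y"
      if "x \<in> A \<union> B" "y \<in> A \<union> B" "block_index (c @ d) x = block_index (c @ d) y" for x y
    proof -
      have less: "block_index c x' < length c" if "x' \<in> A" for x'
        using c that block_index_less[of x' c] by (simp add: Comp_iff)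
      have "x \<in> A \<longleftrightarrow> y \<in> A"
        using that(3) less[of x] less[of y]
        by (cases "x \<in> A"; cases "y \<in> A") (auto simp: block_index_append_Comp[OF c])
      then show ?thesis
        using that AB same_order_on_eq[OF ord(1)] same_order_on_eq[OF ord(2)]
        by (auto simp: block_index_append_Comp[OF c])
    qed
    with z obtain s where "is_surj s" "length s = length (c @ d)" "act s (c @ d) = z"
      using ex_act_if_coarser[OF e] by blast
    with z show "\<exists>s\<in>QSh ?k ?l. act s (c @ d) = z"
      using QSh_iff_comp_restrict[OF c d AB] by (auto simp: QSh_iff)
  qed
  finally show ?thesis .
qed

lemma qsh_comp_restrict:
  assumes "A \<inter> B = {}" "z \<in> Comp (A \<union> B)"
  shows "qsh (comp_restrict z A) (comp_restrict z B) z = 1"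
  by (simp add: qsh_eq[OF comp_restrict_in_Comp_Un[OF assms(2)] assms(1)] assms(2))

lemma composition_map_image:
  "inj_on f (\<Union>(set c)) \<Longrightarrow> composition c \<Longrightarrow> composition (map ((`) f) c)"
proof (induction c)
  case (Cons X c)
  have inj: "inj_on f (\<Union>(set c))"
    using Cons.prems(1) by (rule inj_on_subset) auto
  have "f ` X \<inter> f ` \<Union>(set c) = f ` (X \<inter> \<Union>(set c))"
    using Cons.prems(1) by (intro inj_on_image_Int[symmetric]) auto
  with Cons.IH[OF inj] Cons.prems(2) show ?case
    by (simp add: image_Union)
qed simp

lemma Comp_map_image:
  assumes "inj_on f A" "c \<in> Comp A"
  shows "map ((`) f) c \<in> Comp (f ` A)"
proof -
  have "composition c" "\<Union>(set c) = A"
    using assms(2) by (simp_all add: Comp_iff)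
  with assms(1) show ?thesis
    by (simp add: Comp_iff composition_map_image flip: image_Union)
qed

lemma map_image_inv_into: "inj_on f A \<Longrightarrow> \<Union>(set c) \<subseteq> A \<Longrightarrow> map ((`) (inv_into A f)) (map ((`) f) c) = c"
  by (induction c) (auto simp: inv_into_image_cancel)

lemma map_image_f_inv_into: "\<Union>(set w) \<subseteq> f ` A \<Longrightarrow> map ((`) f) (map ((`) (inv_into A f)) w) = w"
  by (induction w) (auto simp: image_inv_into_cancel)

lemma Comp_map_inv_into: "inj_on f A \<Longrightarrow> w \<in> Comp (f ` A) \<Longrightarrow> map ((`) (inv_into A f)) w \<in> Comp A"
  using Comp_map_image[OF inj_on_inv_into[of "f ` A" f A], of w] by (simp add: inv_into_image_cancel)

lemma map_image_eq_iff:
  assumes f: "inj_on f A" and c: "c \<in> Comp A"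
  shows "map ((`) f) c = w \<longleftrightarrow> w \<in> Comp (f ` A) \<and> c = map ((`) (inv_into A f)) w"
proof
  assume w: "map ((`) f) c = w"
  have "\<Union>(set c) \<subseteq> A"
    using c by (simp add: Comp_iff)
  then have "c = map ((`) (inv_into A f)) (map ((`) f) c)"
    using map_image_inv_into[OF f] by (simp del: map_map)
  with w show "w \<in> Comp (f ` A) \<and> c = map ((`) (inv_into A f)) w"
    using Comp_map_image[OF f c] by simp
next
  assume w: "w \<in> Comp (f ` A) \<and> c = map ((`) (inv_into A f)) w"
  then have "\<Union>(set w) \<subseteq> f ` A"
    by (simp add: Comp_iff)
  with w show "map ((`) f) c = w"
    using map_image_f_inv_into by (simp del: map_map)
qed

lemma comp_restrict_map_image:
  "inj_on h (\<Union>(set v) \<union> X) \<Longrightarrow> map ((`) h) (comp_restrict v X) = comp_restrict (map ((`) h) v) (h ` X)"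
proof (induction v)
  case (Cons Y v)
  have inj: "inj_on h (\<Union>(set v) \<union> X)"
    using Cons.prems by (rule inj_on_subset) auto
  have "h ` (Y \<inter> X) = h ` Y \<inter> h ` X"
    using Cons.prems by (intro inj_on_image_Int) auto
  with Cons.IH[OF inj] show ?case
    by (auto simp: comp_restrict_Cons)
qed simp

lemma refine_map_image:
  assumes "inj_on h (\<Union>(set u) \<union> \<Union>(set v))"
  shows "map ((`) h) (refine u v) = refine (map ((`) h) u) (map ((`) h) v)"
proof -
  have "map ((`) h) (comp_restrict v X) = comp_restrict (map ((`) h) v) (h ` X)" if "X \<in> set u" for X
    using that by (intro comp_restrict_map_image inj_on_subset[OF assms]) auto
  then show ?thesis
    unfolding refine_def map_concat map_map by (intro arg_cong[where f = concat] map_cong) auto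
qed

section \<open>Closed forms of the structure maps\<close>

lemma delta_eq:
  assumes A: "finite A"
  shows "delta A x (u, v) = (if u \<in> Comp A \<and> v \<in> Comp A then x (refine u v) else 0)"
proof -
  have "delta A x (u, v) = (\<Sum>c\<in>Comp A. x c * dlt c (u, v))"
    by (simp add: delta_def)
  also have "\<dots> = (if refine u v \<in> Comp A then x (refine u v) * dlt (refine u v) (u, v) else 0)"
    by (rule sum_eq_single) (auto simp: finite_Comp[OF A] dlt_eq)
  also have "\<dots> = (if u \<in> Comp A \<and> v \<in> Comp A then x (refine u v) else 0)"
    by (auto simp: dlt_eq refine_in_Comp)
  finally show ?thesis .
qed

lemma mult_eq:
  assumes A: "finite A" and B: "finite B" and AB: "A \<inter> B = {}"
  shows "mult A B x y z =
    (if z \<in> Comp (A \<union> B) then x (comp_restrict z A) * y (comp_restrict z B) else 0)"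
proof -
  have "mult A B x y z = (\<Sum>(c, d)\<in>Comp A \<times> Comp B. x c * y d * qsh c d z)"
    by (simp add: mult_def)
  also have "\<dots> = (if (comp_restrict z A, comp_restrict z B) \<in> Comp A \<times> Comp B then
      x (comp_restrict z A) * y (comp_restrict z B) * qsh (comp_restrict z A) (comp_restrict z B) z else 0)"
    by (subst sum_eq_single[where a = "(comp_restrict z A, comp_restrict z B)"])
      (auto simp: finite_Comp A B qsh_eq AB split: if_splits)
  also have "\<dots> = (if z \<in> Comp (A \<union> B) then x (comp_restrict z A) * y (comp_restrict z B) else 0)"
    using comp_restrict_in_Comp_Un[of z A B] by (auto simp: qsh_comp_restrict AB qsh_eq)
  finally show ?thesis .
qed

lemma mult2_eq:
  assumes A: "finite A" and B: "finite B" and AB: "A \<inter> B = {}"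
  shows "mult2 A B S T (u, v) = (if u \<in> Comp (A \<union> B) \<and> v \<in> Comp (A \<union> B) then
      S (comp_restrict u A, comp_restrict v A) * T (comp_restrict u B, comp_restrict v B) else 0)"
proof -
  let ?CA = "Comp A \<times> Comp A" and ?CB = "Comp B \<times> Comp B"
  let ?p = "((comp_restrict u A, comp_restrict v A), (comp_restrict u B, comp_restrict v B))"
  let ?F = "\<lambda>((a, b), (c, d)). S (a, b) * T (c, d) * qsh a c u * qsh b d v"
  have "mult2 A B S T (u, v) = (\<Sum>p\<in>?CA \<times> ?CB. ?F p)"
    unfolding mult2_def by (simp add: split_beta sum.cartesian_product)
  also have "\<dots> = (if ?p \<in> ?CA \<times> ?CB then ?F ?p else 0)"
    by (subst sum_eq_single[where a = ?p]) (auto simp: finite_Comp A B qsh_eq AB split: if_splits)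
  also have "\<dots> = (if u \<in> Comp (A \<union> B) \<and> v \<in> Comp (A \<union> B) then
      S (comp_restrict u A, comp_restrict v A) * T (comp_restrict u B, comp_restrict v B) else 0)"
    using comp_restrict_in_Comp_Un[of u A B] comp_restrict_in_Comp_Un[of v A B]
    by (auto simp: qsh_comp_restrict AB qsh_eq)
  finally show ?thesis .
qed

lemma delta_id_eq:
  assumes A: "finite A"
  shows "delta_id A T (u, v, w) =
    (if u \<in> Comp A \<and> v \<in> Comp A \<and> w \<in> Comp A then T (refine u v, w) else 0)"
proof -
  have "delta_id A T (u, v, w) = (\<Sum>(a, b)\<in>Comp A \<times> Comp A. T (a, b) * dlt a (u, v) * (if b = w then 1 else 0))"
    by (simp add: delta_id_def)
  also have "\<dots> = (if u \<in> Comp A \<and> v \<in> Comp A \<and> w \<in> Comp A then T (refine u v, w) else 0)"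
    by (subst sum_eq_single[where a = "(refine u v, w)"])
      (auto simp: finite_Comp A dlt_eq dlt_refine refine_in_Comp split: if_splits)
  finally show ?thesis .
qed

lemma id_delta_eq:
  assumes A: "finite A"
  shows "id_delta A T (u, v, w) =
    (if u \<in> Comp A \<and> v \<in> Comp A \<and> w \<in> Comp A then T (u, refine v w) else 0)"
proof -
  have "id_delta A T (u, v, w) = (\<Sum>(a, b)\<in>Comp A \<times> Comp A. T (a, b) * (if a = u then 1 else 0) * dlt b (v, w))"
    by (simp add: id_delta_def)
  also have "\<dots> = (if u \<in> Comp A \<and> v \<in> Comp A \<and> w \<in> Comp A then T (u, refine v w) else 0)"
    by (subst sum_eq_single[where a = "(u, refine v w)"])
      (auto simp: finite_Comp A dlt_eq dlt_refine refine_in_Comp split: if_splits)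
  finally show ?thesis .
qed

lemma eps'_eq: "a \<in> Comp A \<Longrightarrow> eps' a = (if a = one_block A then 1 else 0)"
  using Comp_length_le_1_iff[of a A] by (simp add: eps'_def)

lemma eps'_one_block: "eps' (one_block A) = 1"
  by (simp add: eps'_def one_block_def)

lemma epsp_eq:
  assumes A: "finite A"
  shows "epsp A x = x (one_block A)"
proof -
  have "epsp A x = (\<Sum>c\<in>Comp A. x c * eps' c)"
    by (simp add: epsp_def)
  also have "\<dots> = x (one_block A)"
    by (subst sum_eq_single[where a = "one_block A"])
      (auto simp: finite_Comp A eps'_eq eps'_one_block one_block_in_Comp)
  finally show ?thesis .
qed

lemma eps_id_eq:
  assumes A: "finite A"
  shows "eps_id A T w = (if w \<in> Comp A then T (one_block A, w) else 0)"
  unfolding eps_id_def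
  by (subst sum_eq_single[where a = "(one_block A, w)"])
    (auto simp: finite_Comp A eps'_eq eps'_one_block one_block_in_Comp split: if_splits)

lemma id_eps_eq:
  assumes A: "finite A"
  shows "id_eps A T w = (if w \<in> Comp A then T (w, one_block A) else 0)"
  unfolding id_eps_def
  by (subst sum_eq_single[where a = "(w, one_block A)"])
    (auto simp: finite_Comp A eps'_eq eps'_one_block one_block_in_Comp split: if_splits)

lemma Delta_eq:
  assumes A: "finite A" and B: "finite B" and AB: "A \<inter> B = {}"
  shows "Delta A B x (a, b) = (if a \<in> Comp A \<and> b \<in> Comp B then x (a @ b) else 0)"
proof -
  have "Delta A B x (a, b) = (\<Sum>c\<in>Comp (A \<union> B). x c * (if c = a @ b \<and> \<Union>(set a) = A then 1 else 0))"
    by (simp add: Delta_def dec_def)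
  also have "\<dots> = (if a @ b \<in> Comp (A \<union> B) \<and> \<Union>(set a) = A then x (a @ b) else 0)"
    by (subst sum_eq_single[where a = "a @ b"]) (auto simp: finite_Comp A B)
  finally show ?thesis
    using append_in_Comp_iff[OF AB] by simp
qed

lemma Delta_id_eq:
  assumes A: "finite A" and B: "finite B" and AB: "A \<inter> B = {}"
  shows "Delta_id A B T (u, v, w) =
    (if u \<in> Comp A \<and> v \<in> Comp B \<and> w \<in> Comp (A \<union> B) then T (u @ v, w) else 0)"
proof -
  have "Delta_id A B T (u, v, w) = (\<Sum>(a, b)\<in>Comp (A \<union> B) \<times> Comp (A \<union> B).
      T (a, b) * (if a = u @ v \<and> \<Union>(set u) = A then 1 else 0) * (if b = w then 1 else 0))"
    by (simp add: Delta_id_def dec_def)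
  also have "\<dots> = (if u @ v \<in> Comp (A \<union> B) \<and> \<Union>(set u) = A \<and> w \<in> Comp (A \<union> B) then T (u @ v, w) else 0)"
    by (subst sum_eq_single[where a = "(u @ v, w)"]) (auto simp: finite_Comp A B split: if_splits)
  finally show ?thesis
    using append_in_Comp_iff[OF AB] by auto
qed

lemma m1324_dd_eq:
  assumes A: "finite A" and B: "finite B" and AB: "A \<inter> B = {}"
  shows "m1324_dd A B S (u, v, w) = (if u \<in> Comp A \<and> v \<in> Comp B \<and> w \<in> Comp (A \<union> B) then
      S (refine u (comp_restrict w A), refine v (comp_restrict w B)) else 0)"
proof -
  let ?C = "Comp A \<times> Comp B"
  let ?p = "((refine u (comp_restrict w A), refine v (comp_restrict w B)),
    (comp_restrict w A, comp_restrict w B))"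
  let ?F = "\<lambda>((a, b), (q, r)). S (a, b) * dlt a (u, q) * dlt b (v, r) * qsh q r w"
  have "m1324_dd A B S (u, v, w) = (\<Sum>p\<in>?C \<times> ?C. ?F p)"
    unfolding m1324_dd_def by (simp add: split_beta sum.cartesian_product)
  also have "\<dots> = (if ?p \<in> ?C \<times> ?C then ?F ?p else 0)"
    by (subst sum_eq_single[where a = ?p]) (auto simp: finite_Comp A B qsh_eq dlt_eq AB split: if_splits)
  also have "\<dots> = (if u \<in> Comp A \<and> v \<in> Comp B \<and> w \<in> Comp (A \<union> B) then
      S (refine u (comp_restrict w A), refine v (comp_restrict w B)) else 0)"
    using comp_restrict_in_Comp_Un[of w A B]
    by (auto simp: qsh_comp_restrict AB qsh_eq dlt_eq refine_in_Comp dlt_refine)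
  finally show ?thesis .
qed

lemma relab_eq:
  assumes A: "finite A" and f: "inj_on f A"
  shows "relab A f x w = (if w \<in> Comp (f ` A) then x (map ((`) (inv_into A f)) w) else 0)"
  unfolding relab_def
  by (subst sum_eq_single[where a = "map ((`) (inv_into A f)) w"])
    (auto simp: finite_Comp A map_image_eq_iff[OF f] Comp_map_inv_into[OF f] simp del: map_map)

lemma relab2_eq:
  assumes A: "finite A" and f: "inj_on f A"
  shows "relab2 A f T (u, v) = (if u \<in> Comp (f ` A) \<and> v \<in> Comp (f ` A) then
    T (map ((`) (inv_into A f)) u, map ((`) (inv_into A f)) v) else 0)"
  unfolding relab2_def case_prod_conv
  by (subst sum_eq_single[where a = "(map ((`) (inv_into A f)) u, map ((`) (inv_into A f)) v)"])
    (auto simp: finite_Comp A map_image_eq_iff[OF f] Comp_map_inv_into[OF f] simp del: map_map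
      split: if_splits)

section \<open>The double bialgebra axioms\<close>

lemma delta_natural:
  assumes A: "finite A" and f: "bij_betw f A B"
  shows "delta B (relab A f x) = relab2 A f (delta A x)"
proof -
  have inj: "inj_on f A" and B: "B = f ` A"
    using f by (auto simp: bij_betw_def)
  let ?g = "inv_into A f"
  have "map ((`) ?g) (refine u v) = refine (map ((`) ?g) u) (map ((`) ?g) v)"
    if "u \<in> Comp B" "v \<in> Comp B" for u v
    using that B by (intro refine_map_image inj_on_inv_into) (auto simp: Comp_iff)
  then show ?thesis
    using A B by (auto simp: fun_eq_iff delta_eq relab_eq relab2_eq inj refine_in_Comp
        Comp_map_inv_into)
qed

lemma delta_coassoc: "finite A \<Longrightarrow> delta_id A (delta A x) = id_delta A (delta A x)"
  using refine_assoc[where A = A]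
  by (simp add: fun_eq_iff delta_id_eq id_delta_eq delta_eq refine_in_Comp)

lemma delta_counit_left: "finite A \<Longrightarrow> vec A x \<Longrightarrow> eps_id A (delta A x) = x"
  by (auto simp: fun_eq_iff eps_id_eq delta_eq one_block_in_Comp refine_one_block_left vec_def)

lemma delta_counit_right: "finite A \<Longrightarrow> vec A x \<Longrightarrow> id_eps A (delta A x) = x"
  by (auto simp: fun_eq_iff id_eps_eq delta_eq one_block_in_Comp refine_one_block_right vec_def)

lemma delta_mult:
  assumes A: "finite A" and B: "finite B" and AB: "A \<inter> B = {}"
  shows "delta (A \<union> B) (mult A B x y) = mult2 A B (delta A x) (delta B y)"
  using A B AB
  by (auto simp: fun_eq_iff delta_eq mult_eq mult2_eq refine_in_Comp comp_restrict_refine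
      comp_restrict_in_Comp_Un)

lemma epsp_mult:
  assumes A: "finite A" and B: "finite B" and AB: "A \<inter> B = {}"
  shows "epsp (A \<union> B) (mult A B x y) = epsp A x * epsp B y"
  using A B AB by (simp add: epsp_eq mult_eq one_block_in_Comp comp_restrict_one_block)

lemma delta_unit: "delta {} unit = (\<lambda>(u, v). unit u * unit v)"
  by (auto simp: fun_eq_iff delta_eq Comp_empty unit_def basis_def)

lemma epsp_unit: "epsp {} unit = 1"
  by (simp add: epsp_eq unit_def basis_def one_block_def)

lemma Delta_delta_compat:
  assumes A: "finite A" and B: "finite B" and AB: "A \<inter> B = {}"
  shows "Delta_id A B (delta (A \<union> B) x) = m1324_dd A B (Delta A B x)"
proof -
  have "refine (u @ v) w = refine u (comp_restrict w A) @ refine v (comp_restrict w B)"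
    if "u \<in> Comp A" "v \<in> Comp B" for u v w :: "'a set list"
    using that by (simp add: refine_append refine_comp_restrict Comp_iff)
  then show ?thesis
    using A B AB
    by (auto simp: fun_eq_iff Delta_id_eq m1324_dd_eq delta_eq Delta_eq refine_in_Comp
        comp_restrict_in_Comp_Un append_in_Comp)
qed

lemma epsD_delta_compat: "epsD_id (delta {} x) = (\<lambda>w. epsD x * unit w)"
  by (simp add: fun_eq_iff epsD_id_def Comp_empty delta_eq epsD_def unit_def basis_def)

lemma finite_splits: "finite (splits c)"
proof (rule finite_subset)
  let ?L = "{b. set b \<subseteq> set c \<and> length b \<le> length c}"
  show "splits c \<subseteq> {cs. set cs \<subseteq> ?L \<and> length cs \<le> length c}"
  proof
    fix cs assume cs: "cs \<in> splits c"
    then have "\<forall>b\<in>set cs. b \<noteq> []"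
      by (simp add: splits_def)
    then have "length cs \<le> length (concat cs)"
      by (induction cs) (auto simp: Suc_le_eq simp flip: length_greater_0_conv)
    moreover have "set cs \<subseteq> ?L"
      using cs by (auto simp: splits_def length_concat intro!: member_le_sum_list)
    ultimately show "cs \<in> {cs. set cs \<subseteq> ?L \<and> length cs \<le> length c}"
      using cs by (simp add: splits_def)
  qed
  show "finite {cs. set cs \<subseteq> ?L \<and> length cs \<le> length c}"
    by (intro finite_lists_length_le finite_lists_length_le) auto
qed

lemma composition_map_Union:
  "composition (concat cs) \<Longrightarrow> \<forall>b\<in>set cs. b \<noteq> [] \<Longrightarrow> composition (map (\<lambda>b. \<Union>(set b)) cs)"
  by (induction cs) (auto simp: composition_append neq_Nil_conv)

lemma qshs_eq:
  assumes "composition (concat cs)" "finite (\<Union>(set (concat cs)))"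
  shows "(qshs cs v :: 'k::comm_ring_1) = (if v \<in> Comp (\<Union>(set (concat cs))) \<and> (\<forall>b\<in>set cs. comp_restrict v (\<Union>(set b)) = b)
    then 1 else 0)"
  using assms
proof (induction cs arbitrary: v)
  case Nil
  then show ?case
    by (simp add: unit_def basis_def Comp_empty)
next
  case (Cons b bs)
  let ?B1 = "\<Union>(set b)" and ?B2 = "\<Union>(set (concat bs))"
  have bs: "composition (concat bs)" "finite ?B2" and disj: "?B1 \<inter> ?B2 = {}"
    using Cons.prems by (auto simp: composition_append)
  have b: "b \<in> Comp ?B1" "finite ?B1"
    using Cons.prems by (auto simp: Comp_iff composition_append)
  have IH: "(qshs bs (comp_restrict v ?B2) :: 'k) = (if \<forall>b'\<in>set bs. comp_restrict v (\<Union>(set b')) = b' then 1 else 0)"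
    if "v \<in> Comp (?B1 \<union> ?B2)"
  proof -
    have "comp_restrict (comp_restrict v ?B2) (\<Union>(set b')) = comp_restrict v (\<Union>(set b'))"
      if "b' \<in> set bs" for b'
      using that by (intro comp_restrict_comp_restrict) auto
    then show ?thesis
      using Cons.IH[OF bs, of "comp_restrict v ?B2"] comp_restrict_in_Comp_Un[OF that] by simp
  qed
  have "(qshs (b # bs) v :: 'k) = mult ?B1 ?B2 (basis b) (qshs bs) v"
    by simp
  also have "\<dots> = (if v \<in> Comp (?B1 \<union> ?B2) then basis b (comp_restrict v ?B1) * qshs bs (comp_restrict v ?B2) else 0)"
    by (rule mult_eq[OF b(2) bs(2) disj])
  also have "\<dots> = (if v \<in> Comp (\<Union>(set (concat (b # bs)))) \<and>
      (\<forall>b'\<in>set (b # bs). comp_restrict v (\<Union>(set b')) = b') then 1 else 0)"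
    using IH by (auto simp: basis_def)
  finally show ?case .
qed

lemma refine_in_splits:
  assumes u: "u \<in> Comp A" and v: "v \<in> Comp A"
  shows "map (comp_restrict v) u \<in> splits (refine u v)"
proof -
  have "comp_restrict v X \<noteq> []" if "X \<in> set u" for X
  proof -
    have "X \<noteq> {}" "X \<subseteq> \<Union>(set v)"
      using u v that by (auto simp: Comp_iff composition_def)
    then show ?thesis
      using Union_comp_restrict[of v X] by (auto simp del: Union_comp_restrict)
  qed
  then show ?thesis
    by (auto simp: splits_def refine_def)
qed

lemma splits_summand_iff:
  assumes c: "c \<in> Comp A" and cs: "cs \<in> splits c"
  shows "map (\<lambda>b. \<Union>(set b)) cs = u \<and> v \<in> Comp A \<and> (\<forall>b\<in>set cs. comp_restrict v (\<Union>(set b)) = b) \<longleftrightarrow>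
    u \<in> Comp A \<and> v \<in> Comp A \<and> c = refine u v \<and> cs = map (comp_restrict v) u"
proof
  assume lhs: "map (\<lambda>b. \<Union>(set b)) cs = u \<and> v \<in> Comp A \<and> (\<forall>b\<in>set cs. comp_restrict v (\<Union>(set b)) = b)"
  have concat: "concat cs = c" and nonempty: "\<forall>b\<in>set cs. b \<noteq> []"
    using cs by (auto simp: splits_def)
  have "composition (map (\<lambda>b. \<Union>(set b)) cs)"
    using composition_map_Union[OF _ nonempty] c concat by (simp add: Comp_iff)
  moreover have "\<Union>(set (map (\<lambda>b. \<Union>(set b)) cs)) = \<Union>(set (concat cs))"
    by auto
  ultimately have "u \<in> Comp A"
    using lhs c concat by (simp add: Comp_iff)
  moreover have "map (comp_restrict v) u = cs"
  proof -
    have "map (comp_restrict v) u = map (\<lambda>b. comp_restrict v (\<Union>(set b))) cs"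
      using lhs by auto
    also have "\<dots> = cs"
      using lhs by (intro map_idI) auto
    finally show ?thesis .
  qed
  ultimately show "u \<in> Comp A \<and> v \<in> Comp A \<and> c = refine u v \<and> cs = map (comp_restrict v) u"
    using lhs concat by (auto simp: refine_def)
next
  assume rhs: "u \<in> Comp A \<and> v \<in> Comp A \<and> c = refine u v \<and> cs = map (comp_restrict v) u"
  then have "\<Union>(set (comp_restrict v X)) = X" if "X \<in> set u" for X
    using that by (auto simp: Comp_iff)
  with rhs show "map (\<lambda>b. \<Union>(set b)) cs = u \<and> v \<in> Comp A \<and> (\<forall>b\<in>set cs. comp_restrict v (\<Union>(set b)) = b)"
    by (auto intro: map_idI)
qed

lemma dlt_splits:
  assumes A: "finite A" and c: "c \<in> Comp A"
  shows "(dlt c (u, v) :: 'k::comm_ring_1) =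
    (\<Sum>cs\<in>splits c. (if map (\<lambda>b. \<Union>(set b)) cs = u then 1 else 0) * qshs cs v)"
proof -
  have "(if map (\<lambda>b. \<Union>(set b)) cs = u then 1 else 0) * (qshs cs v :: 'k) =
      (if u \<in> Comp A \<and> v \<in> Comp A \<and> c = refine u v \<and> cs = map (comp_restrict v) u then 1 else 0)"
    if cs: "cs \<in> splits c" for cs
  proof -
    have "concat cs = c"
      using cs by (simp add: splits_def)
    then have "(qshs cs v :: 'k) =
        (if v \<in> Comp A \<and> (\<forall>b\<in>set cs. comp_restrict v (\<Union>(set b)) = b) then 1 else 0)"
      using qshs_eq[of cs v] c A by (simp add: Comp_iff)
    then have "(if map (\<lambda>b. \<Union>(set b)) cs = u then 1 else 0) * (qshs cs v :: 'k) =
        (if map (\<lambda>b. \<Union>(set b)) cs = u \<and> v \<in> Comp A \<and>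
          (\<forall>b\<in>set cs. comp_restrict v (\<Union>(set b)) = b) then 1 else 0)"
      by simp
    then show ?thesis
      unfolding splits_summand_iff[OF c cs] .
  qed
  then have "(\<Sum>cs\<in>splits c. (if map (\<lambda>b. \<Union>(set b)) cs = u then 1 else 0) * (qshs cs v :: 'k)) =
      (\<Sum>cs\<in>splits c. if u \<in> Comp A \<and> v \<in> Comp A \<and> c = refine u v \<and> cs = map (comp_restrict v) u
        then 1 else 0)"
    by (rule sum.cong[OF refl])
  also have "\<dots> = (if u \<in> Comp A \<and> v \<in> Comp A \<and> c = refine u v then 1 else 0)"
    by (subst sum_indicator_unique[OF finite_splits]) (auto intro: refine_in_splits)
  finally show ?thesis
    by (simp add: dlt_eq[OF c])
qed

theorem corollary24:
  shows
  "\<comment> \<open>explicit formula for delta\<close>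
   (\<forall>(A::'a set) c. finite A \<longrightarrow> c \<in> Comp A \<longrightarrow> length c \<ge> 1 \<longrightarrow>
      (dlt c :: _ \<Rightarrow> 'k::field) =
      (\<lambda>(u, v). \<Sum>cs\<in>splits c. (if map (\<lambda>b. \<Union>(set b)) cs = u then 1 else 0) * qshs cs v)) \<and>
   \<comment> \<open>naturality\<close>
   (\<forall>(A::'a set) B f (x::'a set list \<Rightarrow> 'k). finite A \<longrightarrow> bij_betw f A B \<longrightarrow> vec A x \<longrightarrow>
      delta B (relab A f x) = relab2 A f (delta A x)) \<and>
   \<comment> \<open>coassociativity\<close>
   (\<forall>(A::'a set) (x::'a set list \<Rightarrow> 'k). finite A \<longrightarrow> vec A x \<longrightarrow>
      delta_id A (delta A x) = id_delta A (delta A x)) \<and>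
   \<comment> \<open>counit epsilon'\<close>
   (\<forall>(A::'a set) (x::'a set list \<Rightarrow> 'k). finite A \<longrightarrow> vec A x \<longrightarrow>
      eps_id A (delta A x) = x \<and> id_eps A (delta A x) = x) \<and>
   \<comment> \<open>multiplicativity of delta and epsilon'\<close>
   (\<forall>(A::'a set) B (x::'a set list \<Rightarrow> 'k) y. finite A \<longrightarrow> finite B \<longrightarrow> A \<inter> B = {} \<longrightarrow>
      vec A x \<longrightarrow> vec B y \<longrightarrow>
      delta (A \<union> B) (mult A B x y) = mult2 A B (delta A x) (delta B y) \<and>
      epsp (A \<union> B) (mult A B x y) = epsp A x * epsp B y) \<and>
   delta {} (unit :: 'a set list \<Rightarrow> 'k) = (\<lambda>(u, v). unit u * unit v) \<and>
   epsp {} (unit :: 'a set list \<Rightarrow> 'k) = 1 \<and>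
   \<comment> \<open>compatibility of Delta and delta\<close>
   (\<forall>(A::'a set) B (x::'a set list \<Rightarrow> 'k). finite A \<longrightarrow> finite B \<longrightarrow> A \<inter> B = {} \<longrightarrow>
      vec (A \<union> B) x \<longrightarrow>
      Delta_id A B (delta (A \<union> B) x) = m1324_dd A B (Delta A B x)) \<and>
   \<comment> \<open>compatibility of the counit of Delta with delta\<close>
   (\<forall>x::'a set list \<Rightarrow> 'k. vec {} x \<longrightarrow>
      epsD_id (delta {} x) = (\<lambda>w. epsD x * unit w))"
proof (intro conjI allI impI)
  fix A :: "'a set" and c :: "'a set list"
  assume "finite A" "c \<in> Comp A"
  then show "(dlt c :: _ \<Rightarrow> 'k) =
      (\<lambda>(u, v). \<Sum>cs\<in>splits c. (if map (\<lambda>b. \<Union>(set b)) cs = u then 1 else 0) * qshs cs v)"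
    by (auto simp: fun_eq_iff dlt_splits)
qed (simp_all add: delta_natural delta_coassoc delta_counit_left delta_counit_right delta_mult
    epsp_mult delta_unit epsp_unit Delta_delta_compat epsD_delta_compat)

end
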